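(* Let $n\ge 3$ and $\varphi$ a linear functional with $\varphi(e_i)=a_i$, $0<a_1<\dots<a_n$. The flip graph of $\varphi$-monotone paths on $\diamond^n$ has diameter $2(n-1)$.
   Context: $\diamond^n=\mathrm{conv}\{\pm e_1,\dots,\pm e_n\}$. A monotone path is a sequence of vertices $-e_n=v_0,\dots,v_m=e_n$ with $v_{j-1}\neq -v_j$ and $\varphi(v_{j-1})<\varphi(v_j)$. The flip graph has the monotone paths as vertices, two paths being adjacent when they differ by a polygon flip across a 2-face; since the 2-faces of $\diamond^n$ ($n\ge3$) are triangles, this means one path is obtained from the other by inserting or deleting a single vertex. *)

theory Defs
  imports Main "HOL-Library.Extended_Nat"
begin

text \<open>Vertices of the cross-polytope in dimension n are encoded as nonzero integers:
  the integer i (1 \<le> i \<le> n) stands for e_i and -i stands for -e_i.\<close>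

definition cross_vertices :: "nat \<Rightarrow> int set" where
  "cross_vertices n = {v. v \<noteq> 0 \<and> \<bar>v\<bar> \<le> int n}"

definition phi :: "(nat \<Rightarrow> real) \<Rightarrow> int \<Rightarrow> real" where
  "phi a v = (if v > 0 then a (nat v) else - a (nat (- v)))"

text \<open>Monotone paths: vertex sequences from -e_n to e_n, consecutive vertices not antipodal
  (i.e. joined by an edge) and phi strictly increasing.\<close>

definition monotone_path :: "(nat \<Rightarrow> real) \<Rightarrow> nat \<Rightarrow> int list \<Rightarrow> bool" where
  "monotone_path a n p \<longleftrightarrow>
     p \<noteq> [] \<and> hd p = - int n \<and> last p = int n \<and>
     set p \<subseteq> cross_vertices n \<and>
     successively (\<lambda>u w. u \<noteq> - w \<and> phi a u < phi a w) p"

definition flip_adj :: "(nat \<Rightarrow> real) \<Rightarrow> nat \<Rightarrow> int list \<Rightarrow> int list \<Rightarrow> bool" where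
  "flip_adj a n p q \<longleftrightarrow> monotone_path a n p \<and> monotone_path a n q \<and>
     (\<exists>xs ys w. (p = xs @ ys \<and> q = xs @ w # ys) \<or> (q = xs @ ys \<and> p = xs @ w # ys))"

text \<open>Graph distance (infinite if not connected) and diameter of the flip graph.\<close>

definition flip_dist :: "(nat \<Rightarrow> real) \<Rightarrow> nat \<Rightarrow> int list \<Rightarrow> int list \<Rightarrow> enat" where
  "flip_dist a n p q = (INF k \<in> {k. (flip_adj a n ^^ k) p q}. enat k)"

definition flip_diameter :: "(nat \<Rightarrow> real) \<Rightarrow> nat \<Rightarrow> enat" where
  "flip_diameter a n =
     (SUP (p, q) \<in> {(p, q). monotone_path a n p \<and> monotone_path a n q}. flip_dist a n p q)"

end

theory Submission
  imports Defs
begin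

text \<open>Since \<open>\<phi>\<close> increases along the integer encoding of the vertices, a monotone path is
  determined by its vertex set, and the sets that occur are those containing \<open>\<plusminus>e\<^sub>n\<close> whose
  vertex of least absolute value, the bottom vertex (\<open>strict_abs_min\<close>), is unique: consecutive
  antipodes \<open>-e\<^sub>i, e\<^sub>i\<close> are separated exactly by a vertex of smaller index. A flip changes the
  vertex set by one element, so the distance of two paths is at least the size of the symmetric
  difference of their vertex sets, which is \<open>2(n - 1)\<close> for the paths through all of
  \<open>-e\<^sub>1, \<dots>, -e\<^sub>n\<^sub>-\<^sub>1\<close> resp. \<open>e\<^sub>1, \<dots>, e\<^sub>n\<^sub>-\<^sub>1\<close>.

  Conversely, if the union of two vertex sets still has a unique bottom vertex \<open>r\<close>, both sets
  grow to the union through admissible sets (insert \<open>r\<close> first), which realises the symmetric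
  difference. This fails only when the two bottom vertices are \<open>\<plusminus>e\<^sub>i\<close>; then a detour through a
  set with bottom vertex \<open>e\<^sub>1\<close> (if \<open>i \<ge> 2\<close>) or \<open>\<plusminus>e\<^sub>2\<close> (if \<open>i = 1\<close>) costs at most \<open>2(n - 1)\<close>
  flips, by counting over antipodal pairs of vertices.\<close>

lemma successively_conj_iff:
  "successively (\<lambda>u w. P u w \<and> Q u w) xs \<longleftrightarrow> successively P xs \<and> successively Q xs"
  by (induction xs rule: induct_list012) auto

lemma successively_iff_adjacent:
  fixes xs :: "'a::linorder list"
  assumes "sorted_wrt (<) xs"
  shows "successively Q xs \<longleftrightarrow>
    (\<forall>u\<in>set xs. \<forall>w\<in>set xs. u < w \<longrightarrow> (\<forall>x\<in>set xs. \<not> (u < x \<and> x < w)) \<longrightarrow> Q u w)"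
  using assms
proof (induction xs rule: induct_list012)
  case (3 x y zs)
  then have "successively Q (y # zs) \<longleftrightarrow>
    (\<forall>u\<in>set (y # zs). \<forall>w\<in>set (y # zs). u < w \<longrightarrow> (\<forall>v\<in>set (y # zs). \<not> (u < v \<and> v < w)) \<longrightarrow> Q u w)"
    by simp
  with "3.prems" show ?case
    by (auto 0 4)
qed auto

lemma sorted_wrt_less_hd_last:
  fixes xs :: "'a::linorder list"
  assumes "sorted_wrt (<) xs" "set xs \<subseteq> {lo..hi}" "lo \<in> set xs" "hi \<in> set xs"
  shows "hd xs = lo" "last xs = hi"
proof -
  from assms obtain y ys where xs: "xs = y # ys" by (cases xs) auto
  show "hd xs = lo"
    using assms unfolding xs by (cases "lo = y") (auto simp: not_less_iff_gr_or_eq)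
  from assms obtain zs z where xs': "xs = zs @ [z]" by (cases xs rule: rev_exhaust) auto
  show "last xs = hi"
    using assms unfolding xs' by (cases "hi = z") (auto simp: sorted_wrt_append not_less_iff_gr_or_eq)
qed

lemma insort_key_split: "\<exists>xs ys. l = xs @ ys \<and> insort_key f x l = xs @ x # ys"
proof (induction l)
  case (Cons y l)
  then obtain xs ys where "l = xs @ ys" "insort_key f x l = xs @ x # ys" by blast
  then show ?case
  proof (cases "f x \<le> f y")
    case True
    then show ?thesis by (intro exI[of _ "[]"] exI[of _ "y # l"]) simp
  next
    case False
    then show ?thesis
      using \<open>l = xs @ ys\<close> \<open>insort_key f x l = xs @ x # ys\<close>
      by (intro exI[of _ "y # xs"] exI[of _ ys]) simp
  qed
qed simp

lemma sorted_list_of_set_insert_split: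
  assumes "finite F" "w \<notin> F"
  shows "\<exists>xs ys. sorted_list_of_set F = xs @ ys \<and> sorted_list_of_set (insert w F) = xs @ w # ys"
  using assms insort_key_split[of "sorted_list_of_set F" "\<lambda>x. x" w]
  by (simp add: sorted_list_of_set_insert)

lemma relpowp_symp: "symp R \<Longrightarrow> (R ^^ k) x y \<Longrightarrow> (R ^^ k) y x"
proof (induction k arbitrary: y)
  case (Suc k)
  then obtain z where "(R ^^ k) x z" "R z y" by (auto elim: relpowp_Suc_E)
  with Suc show ?case by (meson relpowp_Suc_I2 sympD)
qed simp

lemma relpowp_map:
  assumes "\<And>x y. R x y \<Longrightarrow> S (f x) (f y)"
  shows "(R ^^ k) x y \<Longrightarrow> (S ^^ k) (f x) (f y)"
proof (induction k arbitrary: y)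
  case (Suc k)
  then obtain z where "(R ^^ k) x z" "R z y" by (auto elim: relpowp_Suc_E)
  with Suc assms show ?case by (meson relpowp_Suc_I)
qed simp

definition strict_abs_min :: "int set \<Rightarrow> int \<Rightarrow> bool" where
  "strict_abs_min F r \<longleftrightarrow> r \<in> F \<and> (\<forall>x\<in>F - {r}. \<bar>r\<bar> < \<bar>x\<bar>)"

lemma strict_abs_min_subset:
  "strict_abs_min B r \<Longrightarrow> r \<in> A \<Longrightarrow> A \<subseteq> B \<Longrightarrow> strict_abs_min A r"
  unfolding strict_abs_min_def by blast

lemma strict_abs_min_antipode:
  assumes "strict_abs_min F r" "r \<noteq> 0"
  shows "- r \<notin> F"
proof
  assume "- r \<in> F"
  moreover have "- r \<noteq> r" using assms(2) by simp
  ultimately have "\<bar>r\<bar> < \<bar>- r\<bar>" using assms(1) unfolding strict_abs_min_def by blast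
  then show False by simp
qed

lemma strict_abs_min_Un_left:
  assumes "strict_abs_min S p" "strict_abs_min T q" "\<bar>p\<bar> < \<bar>q\<bar> \<or> q = p"
  shows "strict_abs_min (S \<union> T) p"
proof -
  have "\<bar>p\<bar> < \<bar>x\<bar>" if "x \<in> S \<union> T" "x \<noteq> p" for x
  proof (cases "x \<in> S")
    case True
    then show ?thesis using assms(1) that(2) unfolding strict_abs_min_def by blast
  next
    case False
    then have "x = q \<or> \<bar>q\<bar> < \<bar>x\<bar>" using assms(2) that(1) unfolding strict_abs_min_def by blast
    then show ?thesis using assms(3) that(2) by auto
  qed
  then show ?thesis using assms(1) unfolding strict_abs_min_def by blast
qed

lemma strict_abs_min_Un:
  assumes "strict_abs_min S p" "strict_abs_min T q" "q \<noteq> - p"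
  shows "\<exists>r. strict_abs_min (S \<union> T) r"
proof -
  have "\<bar>p\<bar> < \<bar>q\<bar> \<or> q = p \<or> \<bar>q\<bar> < \<bar>p\<bar>" using assms(3) by (auto simp: abs_eq_iff)
  then show ?thesis
    using strict_abs_min_Un_left[OF assms(1,2)] strict_abs_min_Un_left[OF assms(2,1)]
    by (metis sup_commute)
qed

lemma strict_abs_min_iff_no_adjacent_antipodes:
  assumes "finite F" "F \<noteq> {}" "0 \<notin> F"
  shows "(\<exists>r. strict_abs_min F r) \<longleftrightarrow>
    (\<forall>u\<in>F. \<forall>w\<in>F. u < w \<longrightarrow> (\<forall>x\<in>F. \<not> (u < x \<and> x < w)) \<longrightarrow> u \<noteq> - w)"
proof
  assume "\<exists>r. strict_abs_min F r"
  then obtain r where r: "strict_abs_min F r" ..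
  show "\<forall>u\<in>F. \<forall>w\<in>F. u < w \<longrightarrow> (\<forall>x\<in>F. \<not> (u < x \<and> x < w)) \<longrightarrow> u \<noteq> - w"
  proof (intro ballI impI notI)
    fix u w assume "u \<in> F" "w \<in> F" "u < w" "\<forall>x\<in>F. \<not> (u < x \<and> x < w)" "u = - w"
    moreover have "r \<noteq> w" "r \<noteq> u" using r \<open>u \<in> F\<close> \<open>w \<in> F\<close> \<open>u = - w\<close> assms(3)
      by (auto dest: strict_abs_min_antipode)
    ultimately show False using r unfolding strict_abs_min_def by force
  qed
next
  assume adjacent: "\<forall>u\<in>F. \<forall>w\<in>F. u < w \<longrightarrow> (\<forall>x\<in>F. \<not> (u < x \<and> x < w)) \<longrightarrow> u \<noteq> - w"
  obtain r where r: "r \<in> F" "\<And>x. x \<in> F \<Longrightarrow> \<bar>r\<bar> \<le> \<bar>x\<bar>"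
    using Min_in[of "abs ` F"] Min_le[of "abs ` F"] assms(1,2) by fastforce
  have "- r \<notin> F"
  proof
    assume "- r \<in> F"
    then have "- \<bar>r\<bar> \<in> F" "\<bar>r\<bar> \<in> F" using r(1) by (cases "r < 0"; simp)+
    moreover have "\<forall>x\<in>F. \<not> (- \<bar>r\<bar> < x \<and> x < \<bar>r\<bar>)" using r(2) by force
    moreover have "- \<bar>r\<bar> < \<bar>r\<bar>" using r(1) assms(3) by (cases "r = 0") auto
    ultimately show False using adjacent by blast
  qed
  with r have "strict_abs_min F r"
    unfolding strict_abs_min_def by (metis Diff_iff abs_eq_iff insertI1 order_neq_le_trans)
  then show "\<exists>r. strict_abs_min F r" ..
qed

lemma cross_vertices_subset: "cross_vertices n \<subseteq> {- int n .. int n}"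
  unfolding cross_vertices_def by auto

lemma finite_cross_vertices: "finite (cross_vertices n)"
  using cross_vertices_subset by (rule finite_subset) simp

lemma uminus_cross_vertices: "uminus ` cross_vertices n = cross_vertices n"
  unfolding cross_vertices_def by (auto intro: image_eqI[of _ uminus "- x" for x])

lemma card_cross_vertices_interior: "card (cross_vertices n - {- int n, int n}) = 2 * (n - 1)"
proof -
  have "cross_vertices n - {- int n, int n} = {- int n + 1 .. -1} \<union> {1 .. int n - 1}"
    unfolding cross_vertices_def by auto
  moreover have "card ({- int n + 1 .. -1} \<union> {1 .. int n - 1}) = 2 * (n - 1)"
    by (subst card_Un_disjoint) auto
  ultimately show ?thesis by simp
qed

definition admissible :: "nat \<Rightarrow> int set \<Rightarrow> bool" where
  "admissible n F \<longleftrightarrow>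
     F \<subseteq> cross_vertices n \<and> - int n \<in> F \<and> int n \<in> F \<and> (\<exists>r. strict_abs_min F r)"

lemma admissible_finite: "admissible n F \<Longrightarrow> finite F"
  unfolding admissible_def using finite_cross_vertices finite_subset by blast

lemma admissible_imp_one_le: "admissible n S \<Longrightarrow> 1 \<le> n"
  unfolding admissible_def cross_vertices_def by auto

definition set_flip :: "nat \<Rightarrow> int set \<Rightarrow> int set \<Rightarrow> bool" where
  "set_flip n F G \<longleftrightarrow> admissible n F \<and> admissible n G \<and>
     (\<exists>w. w \<notin> F \<and> G = insert w F \<or> w \<notin> G \<and> F = insert w G)"

lemma symp_set_flip: "symp (set_flip n)"
  unfolding symp_def set_flip_def by blast

lemma flips_to_superset:
  assumes "admissible n A" "A \<subseteq> B" "B \<subseteq> cross_vertices n" "strict_abs_min B r"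
  shows "(set_flip n ^^ card (B - A)) A B"
  using assms
proof (induction "card (B - A)" arbitrary: A)
  case 0
  have "finite (B - A)" using 0(4) finite_cross_vertices finite_subset by blast
  with 0 have "A = B" by auto
  then show ?case by simp
next
  case (Suc k)
  have "B - A \<noteq> {}" using Suc.hyps(2) by (metis card.empty nat.distinct(1))
  then obtain x where x: "x \<in> B - A" "r \<notin> A \<Longrightarrow> x = r"
    using Suc.prems(4) unfolding strict_abs_min_def by blast
  have "r \<in> insert x A" using x by blast
  then have "strict_abs_min (insert x A) r"
    using strict_abs_min_subset[OF Suc.prems(4)] Suc.prems(2) x(1) by blast
  then have "admissible n (insert x A)"
    using Suc.prems(1,3) x(1) unfolding admissible_def by blast
  then have "set_flip n A (insert x A)"
    using Suc.prems(1) x(1) unfolding set_flip_def by blast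
  moreover have "card (B - insert x A) = k"
  proof -
    have "B - insert x A = (B - A) - {x}" by blast
    moreover have "finite (B - A)" using Suc.prems(3) finite_cross_vertices finite_subset by blast
    ultimately show ?thesis using Suc.hyps(2) x(1) by simp
  qed
  then have "(set_flip n ^^ k) (insert x A) B"
    using Suc.hyps(1) \<open>admissible n (insert x A)\<close> Suc.prems(2-4) x(1) by blast
  ultimately have "(set_flip n ^^ Suc k) A B" by (rule relpowp_Suc_I2)
  with Suc.hyps(2) show ?case by simp
qed

lemma flips_via_union:
  assumes "admissible n S" "admissible n T" "strict_abs_min (S \<union> T) r"
  shows "(set_flip n ^^ card (sym_diff S T)) S T"
proof -
  have cross: "S \<union> T \<subseteq> cross_vertices n" using assms(1,2) unfolding admissible_def by blast
  have "(set_flip n ^^ card (T - S)) S (S \<union> T)"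
    using flips_to_superset[OF assms(1) _ cross assms(3)] by (simp add: Un_Diff)
  moreover have "(set_flip n ^^ card (S - T)) T (S \<union> T)"
    using flips_to_superset[OF assms(2) _ cross assms(3)] by (simp add: Un_Diff)
  then have "(set_flip n ^^ card (S - T)) (S \<union> T) T"
    by (rule relpowp_symp[OF symp_set_flip])
  ultimately have "(set_flip n ^^ (card (T - S) + card (S - T))) S T" by (rule relpowp_trans)
  moreover have "card (sym_diff S T) = card (T - S) + card (S - T)"
    using admissible_finite[OF assms(1)] admissible_finite[OF assms(2)]
    by (subst card_Un_disjoint) auto
  ultimately show ?thesis by simp
qed

lemma card_sym_diff_le:
  assumes "admissible n S" "admissible n T"
  shows "card (sym_diff S T) \<le> 2 * (n - 1)"
proof -
  have "sym_diff S T \<subseteq> cross_vertices n - {- int n, int n}"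
    using assms unfolding admissible_def by blast
  then have "card (sym_diff S T) \<le> card (cross_vertices n - {- int n, int n})"
    by (intro card_mono) (use finite_cross_vertices in auto)
  then show ?thesis using card_cross_vertices_interior by simp
qed

lemma card_add_card_le_antipodal:
  fixes U A B :: "int set"
  assumes "finite U" "uminus ` U = U" "A \<subseteq> U" "B \<subseteq> U"
    and pairs: "\<And>z. z \<in> U \<Longrightarrow>
      of_bool (z \<in> A) + of_bool (z \<in> B) + of_bool (- z \<in> A) + of_bool (- z \<in> B) \<le> (2::nat)"
  shows "card A + card B \<le> card U"
proof -
  define g :: "int \<Rightarrow> nat" where "g z = of_bool (z \<in> A) + of_bool (z \<in> B)" for z
  have "{z \<in> U. z \<in> A} = A" "{z \<in> U. z \<in> B} = B" using assms(3,4) by auto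
  then have "card A + card B = (\<Sum>z\<in>U. g z)"
    using assms(1) by (simp add: g_def sum.distrib Int_def)
  moreover have "(\<Sum>z\<in>U. g (- z)) = (\<Sum>z\<in>U. g z)"
    using sum.reindex[of uminus U g] assms(2) by simp
  moreover have "g z + g (- z) \<le> 2" if "z \<in> U" for z
    using pairs[OF that] unfolding g_def by (simp only: add.assoc)
  then have "(\<Sum>z\<in>U. g z + g (- z)) \<le> (\<Sum>z\<in>U. 2)"
    by (intro sum_mono)
  ultimately show ?thesis by (simp add: sum.distrib)
qed

lemma card_sym_diff_add_le:
  assumes "admissible n S" "admissible n M" "admissible n T"
    and "\<And>z. z \<in> cross_vertices n \<Longrightarrow>
      of_bool (z \<in> sym_diff S M) + of_bool (z \<in> sym_diff M T) +
      of_bool (- z \<in> sym_diff S M) + of_bool (- z \<in> sym_diff M T) \<le> (2::nat)"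
  shows "card (sym_diff S M) + card (sym_diff M T) \<le> 2 * (n - 1)"
proof -
  let ?U = "cross_vertices n - {- int n, int n}"
  have "uminus ` ?U = ?U"
    using uminus_cross_vertices[of n] by (auto simp: image_set_diff[OF inj_uminus])
  moreover have "sym_diff S M \<subseteq> ?U" "sym_diff M T \<subseteq> ?U"
    using assms(1-3) unfolding admissible_def by blast+
  ultimately have "card (sym_diff S M) + card (sym_diff M T) \<le> card ?U"
    using assms(4) finite_cross_vertices by (intro card_add_card_le_antipodal) auto
  then show ?thesis using card_cross_vertices_interior by simp
qed

definition detour :: "nat \<Rightarrow> int set \<Rightarrow> int set \<Rightarrow> int set \<Rightarrow> bool" where
  "detour n S T M \<longleftrightarrow> admissible n M \<and>
     (\<exists>r. strict_abs_min (S \<union> M) r) \<and> (\<exists>r. strict_abs_min (M \<union> T) r) \<and>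
     card (sym_diff S M) + card (sym_diff M T) \<le> 2 * (n - 1)"

lemma detour_far:
  assumes S: "admissible n S" "strict_abs_min S p"
    and T: "admissible n T" "strict_abs_min T (- p)"
    and p: "2 \<le> \<bar>p\<bar>"
  shows "detour n S T (insert 1 S)"
proof -
  let ?M = "insert 1 S"
  have large: "2 \<le> \<bar>x\<bar>" if "x \<in> S \<union> T" for x
  proof -
    have "x = p \<or> \<bar>p\<bar> < \<bar>x\<bar> \<or> x = - p \<or> \<bar>- p\<bar> < \<bar>x\<bar>"
      using that S(2) T(2) unfolding strict_abs_min_def by blast
    then show ?thesis using p by auto
  qed
  then have "strict_abs_min (?M \<union> T) 1"
    unfolding strict_abs_min_def by fastforce
  then have "strict_abs_min ?M 1" by (rule strict_abs_min_subset) auto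
  moreover have "1 \<in> cross_vertices n"
    using admissible_imp_one_le[OF S(1)] unfolding cross_vertices_def by simp
  ultimately have M: "admissible n ?M"
    using S(1) unfolding admissible_def by blast
  have "sym_diff S ?M = {1}" "1 \<in> sym_diff ?M T" "- 1 \<notin> sym_diff ?M T"
    using large by force+
  then have "card (sym_diff S ?M) + card (sym_diff ?M T) \<le> 2 * (n - 1)"
    by (intro card_sym_diff_add_le[OF S(1) M T(1)]) auto
  with M \<open>strict_abs_min ?M 1\<close> \<open>strict_abs_min (?M \<union> T) 1\<close> show ?thesis
    unfolding detour_def by (metis Un_absorb1 subset_insertI)
qed

lemma detour_near:
  assumes n: "3 \<le> n"
    and S: "admissible n S" "strict_abs_min S p"
    and T: "admissible n T" "strict_abs_min T (- p)"
    and p: "\<bar>p\<bar> = 1"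
  shows "\<exists>M. detour n S T M"
proof -
  define f :: "int \<Rightarrow> nat" where
    "f c = of_bool (c \<notin> S) + of_bool (c \<notin> T) + of_bool (- c \<in> S) + of_bool (- c \<in> T)" for c
  have "f 2 + f (- 2) = 4" unfolding f_def by simp
  then have "f 2 \<le> 2 \<or> f (- 2) \<le> 2" by linarith
  then obtain c where c: "c = 2 \<or> c = -2" and c_count: "f c \<le> 2" by blast
  define M where "M = insert c {z \<in> S. 3 \<le> \<bar>z\<bar>}"
  have S_large: "2 \<le> \<bar>x\<bar>" if "x \<in> S" "x \<noteq> p" for x
    using that S(2) p unfolding strict_abs_min_def by force
  have T_large: "2 \<le> \<bar>x\<bar>" if "x \<in> T" "x \<noteq> - p" for x
    using that T(2) p unfolding strict_abs_min_def by force
  have "strict_abs_min M c"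
    using c unfolding M_def strict_abs_min_def by auto
  moreover have "M \<subseteq> cross_vertices n" "- int n \<in> M" "int n \<in> M"
    using S(1) n c unfolding M_def admissible_def cross_vertices_def by auto
  ultimately have M: "admissible n M" unfolding admissible_def by blast
  have "strict_abs_min (S \<union> M) p"
    using S(2) S_large c p unfolding M_def strict_abs_min_def by fastforce
  moreover have "strict_abs_min (M \<union> T) (- p)"
    using T(2) T_large c p unfolding M_def strict_abs_min_def by fastforce
  moreover have "card (sym_diff S M) + card (sym_diff M T) \<le> 2 * (n - 1)"
  proof (rule card_sym_diff_add_le[OF S(1) M T(1)])
    fix z assume "z \<in> cross_vertices n"
    then have "3 \<le> \<bar>z\<bar> \<or> \<bar>z\<bar> = \<bar>p\<bar> \<or> \<bar>z\<bar> = \<bar>c\<bar>"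
      using c p unfolding cross_vertices_def by auto
    then consider "3 \<le> \<bar>z\<bar>" | "z = p \<or> z = - p" | "z = c \<or> z = - c"
      by (metis abs_eq_iff)
    then show "of_bool (z \<in> sym_diff S M) + of_bool (z \<in> sym_diff M T) +
      of_bool (- z \<in> sym_diff S M) + of_bool (- z \<in> sym_diff M T) \<le> (2::nat)"
    proof cases
      case 1
      then have "z \<notin> sym_diff S M" "- z \<notin> sym_diff S M" using c unfolding M_def by auto
      moreover have "of_bool (z \<in> sym_diff M T) + of_bool (- z \<in> sym_diff M T) \<le> (2::nat)"
        by (rule order_trans[OF add_mono[OF of_bool_less_eq_one of_bool_less_eq_one]]) simp
      ultimately show ?thesis by (simp only: of_bool_eq add_0 add_0_right)
    next
      case 2
      have "p \<in> S" "p \<notin> T" "- p \<notin> S" "- p \<in> T" "p \<notin> M" "- p \<notin> M"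
        using S(2) T(2) p c strict_abs_min_antipode[OF S(2)] strict_abs_min_antipode[OF T(2)]
        unfolding M_def strict_abs_min_def by auto
      then have "p \<in> sym_diff S M" "p \<notin> sym_diff M T" "- p \<notin> sym_diff S M" "- p \<in> sym_diff M T"
        by blast+
      with 2 show ?thesis by (elim disjE) simp_all
    next
      case 3
      have "c \<in> M" "- c \<notin> M" using c unfolding M_def by auto
      then have "of_bool (c \<in> sym_diff S M) + of_bool (c \<in> sym_diff M T) +
          of_bool (- c \<in> sym_diff S M) + of_bool (- c \<in> sym_diff M T) = f c"
        unfolding f_def by simp
      with 3 c_count show ?thesis by (elim disjE) (simp_all add: add_ac)
    qed
  qed
  ultimately show ?thesis using M unfolding detour_def by blast
qed

lemma flips_via_detour:
  assumes "admissible n S" "admissible n T" "detour n S T M"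
  shows "\<exists>k \<le> 2 * (n - 1). (set_flip n ^^ k) S T"
proof -
  obtain r r' where "strict_abs_min (S \<union> M) r" "strict_abs_min (M \<union> T) r'" "admissible n M"
    using assms(3) unfolding detour_def by blast
  then have "(set_flip n ^^ (card (sym_diff S M) + card (sym_diff M T))) S T"
    using flips_via_union assms(1,2) by (blast intro: relpowp_trans)
  then show ?thesis using assms(3) unfolding detour_def by blast
qed

lemma set_flip_distance_le:
  assumes n: "3 \<le> n" and S: "admissible n S" and T: "admissible n T"
  shows "\<exists>k \<le> 2 * (n - 1). (set_flip n ^^ k) S T"
proof -
  obtain p q where p: "strict_abs_min S p" and q: "strict_abs_min T q"
    using S T unfolding admissible_def by blast
  show ?thesis
  proof (cases "q = - p")
    case False
    then obtain r where "strict_abs_min (S \<union> T) r" using strict_abs_min_Un[OF p q] by blast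
    then show ?thesis
      using flips_via_union[OF S T] card_sym_diff_le[OF S T] by blast
  next
    case True
    have "p \<noteq> 0" using S p unfolding admissible_def cross_vertices_def strict_abs_min_def by auto
    then consider "2 \<le> \<bar>p\<bar>" | "\<bar>p\<bar> = 1" by linarith
    then obtain M where "detour n S T M"
      using detour_far[OF S p T] detour_near[OF n S p T] q True by metis
    then show ?thesis using flips_via_detour[OF S T] by blast
  qed
qed

lemma card_sym_diff_le_flips:
  "(flip_adj a n ^^ k) p q \<Longrightarrow> card (sym_diff (set p) (set q)) \<le> k"
proof (induction k arbitrary: q)
  case (Suc k)
  then obtain r where "(flip_adj a n ^^ k) p r" "flip_adj a n r q" by (auto elim: relpowp_Suc_E)
  from \<open>flip_adj a n r q\<close> obtain xs ys w
    where "r = xs @ ys \<and> q = xs @ w # ys \<or> q = xs @ ys \<and> r = xs @ w # ys"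
    unfolding flip_adj_def by blast
  then have "sym_diff (set p) (set q) \<subseteq> insert w (sym_diff (set p) (set r))" by auto
  then have "card (sym_diff (set p) (set q)) \<le> card (insert w (sym_diff (set p) (set r)))"
    by (intro card_mono) auto
  also have "\<dots> \<le> Suc (card (sym_diff (set p) (set r)))"
    by (simp add: card_insert_if)
  finally show ?case using Suc.IH[OF \<open>(flip_adj a n ^^ k) p r\<close>] by linarith
qed simp

lemma card_sym_diff_le_flip_dist:
  "enat (card (sym_diff (set p) (set q))) \<le> flip_dist a n p q"
  unfolding flip_dist_def using card_sym_diff_le_flips by (intro INF_greatest) auto

lemma extremal_admissible_sets:
  assumes "2 \<le> n"
  shows "admissible n ({- int n .. -1} \<union> {int n})" "admissible n ({- int n} \<union> {1 .. int n})"
    and "sym_diff ({- int n .. -1} \<union> {int n}) ({- int n} \<union> {1 .. int n}) =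
      cross_vertices n - {- int n, int n}"
proof -
  have "strict_abs_min ({- int n .. -1} \<union> {int n}) (- 1)" "strict_abs_min ({- int n} \<union> {1 .. int n}) 1"
    using assms unfolding strict_abs_min_def by auto
  then show "admissible n ({- int n .. -1} \<union> {int n})" "admissible n ({- int n} \<union> {1 .. int n})"
    using assms unfolding admissible_def cross_vertices_def by auto
  show "sym_diff ({- int n .. -1} \<union> {int n}) ({- int n} \<union> {1 .. int n}) =
      cross_vertices n - {- int n, int n}"
    using assms unfolding cross_vertices_def by auto
qed

context
  fixes a :: "nat \<Rightarrow> real" and n :: nat
  assumes a_pos: "0 < a 1"
    and a_mono: "\<And>i j. 1 \<le> i \<Longrightarrow> i < j \<Longrightarrow> j \<le> n \<Longrightarrow> a i < a j"
begin

lemma phi_less_iff: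
  assumes "v \<in> cross_vertices n" "w \<in> cross_vertices n"
  shows "phi a v < phi a w \<longleftrightarrow> v < w"
proof -
  have a_pos': "0 < a i" if "1 \<le> i" "i \<le> n" for i
    using a_pos a_mono[of 1 i] that by (cases "i = 1") auto
  have phi_mono: "phi a v < phi a w"
    if "v \<in> cross_vertices n" "w \<in> cross_vertices n" "v < w" for v w
  proof -
    have "1 \<le> nat \<bar>v\<bar>" "nat \<bar>v\<bar> \<le> n" "1 \<le> nat \<bar>w\<bar>" "nat \<bar>w\<bar> \<le> n"
      using that(1,2) unfolding cross_vertices_def by auto
    then show ?thesis
      using that(3) a_pos'[of "nat \<bar>v\<bar>"] a_pos'[of "nat \<bar>w\<bar>"]
        a_mono[of "nat v" "nat w"] a_mono[of "nat (- w)" "nat (- v)"]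
      unfolding phi_def by (auto split: if_splits)
  qed
  show ?thesis
    using phi_mono[OF assms] phi_mono[OF assms(2,1)] by (cases v w rule: linorder_cases) auto
qed

lemma monotone_path_iff: "monotone_path a n p \<longleftrightarrow> sorted_wrt (<) p \<and> admissible n (set p)"
proof (cases "set p \<subseteq> cross_vertices n")
  case False
  then show ?thesis unfolding monotone_path_def admissible_def by blast
next
  case cross: True
  have "successively (\<lambda>u w. u \<noteq> - w \<and> phi a u < phi a w) p \<longleftrightarrow>
      successively (\<lambda>u w. u < w \<and> u \<noteq> - w) p"
    using cross phi_less_iff by (intro successively_cong) auto
  also have "\<dots> \<longleftrightarrow> sorted_wrt (<) p \<and> successively (\<lambda>u w. u \<noteq> - w) p"
    by (simp add: successively_conj_iff successively_conv_sorted_wrt)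
  finally have steps: "successively (\<lambda>u w. u \<noteq> - w \<and> phi a u < phi a w) p \<longleftrightarrow>
      sorted_wrt (<) p \<and> successively (\<lambda>u w. u \<noteq> - w) p" .
  have "p \<noteq> [] \<and> hd p = - int n \<and> last p = int n \<longleftrightarrow> - int n \<in> set p \<and> int n \<in> set p"
    if "sorted_wrt (<) p"
    using that cross cross_vertices_subset sorted_wrt_less_hd_last[of p "- int n" "int n"]
    by (metis empty_iff hd_in_set last_in_set list.set(1) subset_trans)
  moreover have "successively (\<lambda>u w. u \<noteq> - w) p \<longleftrightarrow> (\<exists>r. strict_abs_min (set p) r)"
    if "sorted_wrt (<) p" "p \<noteq> []"
  proof -
    have "0 \<notin> set p" using cross unfolding cross_vertices_def by auto
    with that show ?thesis
      by (simp add: successively_iff_adjacent strict_abs_min_iff_no_adjacent_antipodes)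
  qed
  ultimately show ?thesis
    using steps cross unfolding monotone_path_def admissible_def by auto
qed

lemma sorted_list_of_set_path: "monotone_path a n p \<Longrightarrow> sorted_list_of_set (set p) = p"
  using monotone_path_iff sorted_list_of_set.idem_if_sorted_distinct strict_sorted_iff by metis

lemma monotone_path_sorted_list_of_set: "admissible n F \<Longrightarrow> monotone_path a n (sorted_list_of_set F)"
  using monotone_path_iff admissible_finite by simp

lemma flip_adj_sorted_list_of_set:
  assumes "set_flip n F G"
  shows "flip_adj a n (sorted_list_of_set F) (sorted_list_of_set G)"
proof -
  have F: "admissible n F" and G: "admissible n G" using assms unfolding set_flip_def by auto
  obtain w where "w \<notin> F \<and> G = insert w F \<or> w \<notin> G \<and> F = insert w G"
    using assms unfolding set_flip_def by blast
  then have "\<exists>xs ys w.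
      sorted_list_of_set F = xs @ ys \<and> sorted_list_of_set G = xs @ w # ys \<or>
      sorted_list_of_set G = xs @ ys \<and> sorted_list_of_set F = xs @ w # ys"
    using sorted_list_of_set_insert_split admissible_finite[OF F] admissible_finite[OF G] by metis
  then show ?thesis
    unfolding flip_adj_def using monotone_path_sorted_list_of_set F G by blast
qed

lemma flip_dist_le:
  assumes "3 \<le> n" "monotone_path a n p" "monotone_path a n q"
  shows "flip_dist a n p q \<le> enat (2 * (n - 1))"
proof -
  have "admissible n (set p)" "admissible n (set q)"
    using assms(2,3) monotone_path_iff by blast+
  then obtain k where k: "k \<le> 2 * (n - 1)" "(set_flip n ^^ k) (set p) (set q)"
    using set_flip_distance_le assms(1) by blast
  then have "(flip_adj a n ^^ k) (sorted_list_of_set (set p)) (sorted_list_of_set (set q))"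
    by (intro relpowp_map[where f = sorted_list_of_set] flip_adj_sorted_list_of_set)
  then have "(flip_adj a n ^^ k) p q"
    using assms(2,3) sorted_list_of_set_path by simp
  then have "flip_dist a n p q \<le> enat k" unfolding flip_dist_def by (intro INF_lower) simp
  with k(1) show ?thesis by (simp add: order_trans)
qed

lemma flip_dist_attained:
  assumes "2 \<le> n"
  shows "\<exists>p q. monotone_path a n p \<and> monotone_path a n q \<and> enat (2 * (n - 1)) \<le> flip_dist a n p q"
proof -
  let ?S = "{- int n .. -1} \<union> {int n}" and ?T = "{- int n} \<union> {1 .. int n}"
  let ?p = "sorted_list_of_set ?S" and ?q = "sorted_list_of_set ?T"
  have "set ?p = ?S" "set ?q = ?T" by (rule set_sorted_list_of_set, simp)+
  then have "enat (2 * (n - 1)) \<le> flip_dist a n ?p ?q"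
    using card_sym_diff_le_flip_dist[of ?p ?q a n] extremal_admissible_sets(3)[OF assms]
      card_cross_vertices_interior by simp
  moreover have "monotone_path a n ?p" "monotone_path a n ?q"
    using extremal_admissible_sets(1,2)[OF assms] monotone_path_sorted_list_of_set
    by blast+
  ultimately show ?thesis by blast
qed

end

theorem theorem1p1:
  fixes a :: "nat \<Rightarrow> real" and n :: nat
  assumes "n \<ge> 3"
    and "0 < a 1"
    and "\<And>i j. 1 \<le> i \<Longrightarrow> i < j \<Longrightarrow> j \<le> n \<Longrightarrow> a i < a j"
  shows "flip_diameter a n = enat (2 * (n - 1))"
proof -
  have upper: "flip_dist a n p q \<le> enat (2 * (n - 1))"
    if "monotone_path a n p" "monotone_path a n q" for p q
    using flip_dist_le[where a = a and n = n, OF assms(2,3,1) that] .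
  obtain p q where "monotone_path a n p" "monotone_path a n q"
    and "enat (2 * (n - 1)) \<le> flip_dist a n p q"
    using flip_dist_attained[where a = a and n = n, OF assms(2,3)] assms(1) by auto
  then show ?thesis
    unfolding flip_diameter_def using upper
    by (intro antisym SUP_least SUP_upper2[of "(p, q)"]) auto
qed

end
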